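(* Let $i\in\{1,2\}$, let $T\ge 1$, $\mathbb{T}=\{0,1,\dots,T-1\}$, and consider the linear time-varying system $\Sigma_{i,\mathbb{T}}$: $x_i(t+1)=A_i(t)x_i(t)+B_i(t)u_i(t)$, $y_i(t)=C_i(t)x_i(t)+D_i(t)u_i(t)$, $t\in\mathbb{T}$, with $u_i(t)\in\mathbb{R}^{n_u}$, $y_i(t)\in\mathbb{R}^{n_y}$, and fixed initial state $x_i(0)=x_{i0}$. Let $\mathcal{B}_{i,x_{i0}}\subseteq\mathbb{R}^{n_wT}$ ($n_w=n_u+n_y$) be its admissible behavior (defined in the context). Then $\mathcal{B}_{i,x_{i0}}$ is an affine set. Moreover, suppose $n_uT+1$ test inputs $\mathbf{u}_i^0,\mathbf{u}_i^1,\dots,\mathbf{u}_i^{n_uT}\in\mathbb{R}^{n_uT}$ are applied, each from the initial state $x_{i0}$, producing outputs $\mathbf{y}_i^k$, and that (1) $\mathbf{u}_i^0=0\in\mathbb{R}^{n_uT}$ and (2) $\operatorname{rank}[\mathbf{u}_i^1,\dots,\mathbf{u}_i^{n_uT}]=n_uT$. Set $w_i^k=\operatorname{col}(\mathbf{u}_i^k,\mathbf{y}_i^k)$ and $W_i=[w_i^1-w_i^0,\,w_i^2-w_i^0,\dots,w_i^{n_uT}-w_i^0]$. Then a vector $\overline{w}=\operatorname{col}(\overline{\mathbf{u}}_i,\overline{\mathbf{y}}_i)\in\mathbb{R}^{n_wT}$ belongs to $\mathcal{B}_{i,x_{i0}}$ if and only if there exists $g_i\in\mathbb{R}^{n_uT}$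 with $\overline{w}=W_ig_i+w_i^0$.
   Context: The state $x_i(t)$ has some finite (unknown) dimension and $A_i(t),B_i(t),C_i(t),D_i(t)$ are real matrices of compatible sizes. For a sequence over $\mathbb{T}$, supervectors are $\mathbf{u}_i=[u_i(0)^{\rm T},\dots,u_i(T-1)^{\rm T}]^{\rm T}\in\mathbb{R}^{n_uT}$, $\mathbf{y}_i=[y_i(0)^{\rm T},\dots,y_i(T-1)^{\rm T}]^{\rm T}\in\mathbb{R}^{n_yT}$, and similarly $\mathbf{x}_i$. The admissible behavior $\mathcal{B}_{i,x_{i0}}$ is the set of all $\operatorname{col}(\mathbf{u}_i,\mathbf{y}_i)\in\mathbb{R}^{n_wT}$ for which there exists a state supervector $\mathbf{x}_i$ with $x_i(0)=x_{i0}$ such that $(\mathbf{u}_i,\mathbf{y}_i,\mathbf{x}_i)$ satisfies the system equations for all $t\in\mathbb{T}$. The output $\mathbf{y}_i^k$ is the output supervector of the system driven by input $\mathbf{u}_i^k$ from $x_i(0)=x_{i0}$. *)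

theory Defs
  imports "Jordan_Normal_Form.DL_Rank"
begin

text \<open>Supervectors are JNF vectors of dimension m*T; block t (t < T) holds the
  value at time t, i.e. entries t*m .. t*m+m-1.\<close>

definition blk :: "nat \<Rightarrow> real vec \<Rightarrow> nat \<Rightarrow> real vec" where
  "blk m v t = vec m (\<lambda>j. v $ (t * m + j))"

definition supervec :: "nat \<Rightarrow> nat \<Rightarrow> (nat \<Rightarrow> real vec) \<Rightarrow> real vec" where
  "supervec m T f = vec (m * T) (\<lambda>k. f (k div m) $ (k mod m))"

text \<open>col(u,y) is u @v y; the two parts of w in R^{(nu+ny)T}.\<close>
definition u_part :: "nat \<Rightarrow> nat \<Rightarrow> real vec \<Rightarrow> real vec" where
  "u_part nu T w = vec (nu * T) (\<lambda>i. w $ i)"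

definition y_part :: "nat \<Rightarrow> nat \<Rightarrow> nat \<Rightarrow> real vec \<Rightarrow> real vec" where
  "y_part nu ny T w = vec (ny * T) (\<lambda>i. w $ (nu * T + i))"

definition behavior ::
  "(nat \<Rightarrow> real mat) \<Rightarrow> (nat \<Rightarrow> real mat) \<Rightarrow> (nat \<Rightarrow> real mat) \<Rightarrow> (nat \<Rightarrow> real mat)
   \<Rightarrow> nat \<Rightarrow> nat \<Rightarrow> nat \<Rightarrow> real vec \<Rightarrow> real vec set" where
  "behavior A B C D nu ny T x0 =
    {w \<in> carrier_vec ((nu + ny) * T).
      \<exists>x :: nat \<Rightarrow> real vec. x 0 = x0 \<and>
        (\<forall>t < T. x (Suc t) = A t *\<^sub>v x t + B t *\<^sub>v blk nu (u_part nu T w) t \<and>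
                 blk ny (y_part nu ny T w) t = C t *\<^sub>v x t + D t *\<^sub>v blk nu (u_part nu T w) t)}"

primrec state_traj ::
  "(nat \<Rightarrow> real mat) \<Rightarrow> (nat \<Rightarrow> real mat) \<Rightarrow> nat \<Rightarrow> real vec \<Rightarrow> real vec \<Rightarrow> nat \<Rightarrow> real vec" where
  "state_traj A B nu x0 u 0 = x0"
| "state_traj A B nu x0 u (Suc t) =
     A t *\<^sub>v state_traj A B nu x0 u t + B t *\<^sub>v blk nu u t"

definition sys_output ::
  "(nat \<Rightarrow> real mat) \<Rightarrow> (nat \<Rightarrow> real mat) \<Rightarrow> (nat \<Rightarrow> real mat) \<Rightarrow> (nat \<Rightarrow> real mat)
   \<Rightarrow> nat \<Rightarrow> nat \<Rightarrow> nat \<Rightarrow> real vec \<Rightarrow> real vec \<Rightarrow> real vec" where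
  "sys_output A B C D nu ny T x0 u =
     supervec ny T (\<lambda>t. C t *\<^sub>v state_traj A B nu x0 u t + D t *\<^sub>v blk nu u t)"

definition affine_vec :: "real vec set \<Rightarrow> bool" where
  "affine_vec S \<longleftrightarrow> (\<forall>x\<in>S. \<forall>y\<in>S. \<forall>c::real. c \<cdot>\<^sub>v x + (1 - c) \<cdot>\<^sub>v y \<in> S)"

end

theory Submission
  imports Defs
begin

text \<open>The output supervector is an affine function of the input supervector,
  \<open>y = M u + F\<close>, where \<open>F\<close> is the free response from \<open>x0\<close> and \<open>M\<close> stacks the maps
  from the whole input sequence to the outputs at each time.  Hence the behavior is the
  graph \<open>{col(u, M u + F)}\<close> of an affine map, which is an affine set.  With
  \<open>u\<^sup>0 = 0\<close> one has \<open>w\<^sup>0 = col(0, F)\<close> and \<open>w\<^sup>k - w\<^sup>0 = col(u\<^sup>k, M u\<^sup>k)\<close>, so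
  \<open>W g + w\<^sup>0 = col(U g, M (U g) + F)\<close> for the square matrix \<open>U = [u\<^sup>1, \<dots>, u\<^sup>n]\<close>, \<open>n = n\<^sub>u T\<close>;
  full rank of \<open>U\<close> makes \<open>U g\<close> range over all inputs.\<close>

lemma block_index_less:
  fixes t T j m :: nat
  assumes "t < T" "j < m"
  shows "t * m + j < m * T"
proof -
  have "t * m + j < Suc t * m" using assms(2) by simp
  also have "\<dots> \<le> T * m" using assms(1) by (intro mult_right_mono) auto
  finally show ?thesis by (simp add: mult.commute)
qed

lemma div_less_of_less_mult: "(k::nat) < m * T \<Longrightarrow> k div m < T"
  by (simp add: less_mult_imp_div_less mult.commute)

lemma blk_supervec:
  assumes "t < T" "f t \<in> carrier_vec m"
  shows "blk m (supervec m T f) t = f t"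
proof (rule eq_vecI)
  fix j assume "j < dim_vec (f t)"
  hence j: "j < m" using assms by simp
  have "(t * m + j) div m = t" "(t * m + j) mod m = j" using j by auto
  then show "blk m (supervec m T f) t $ j = f t $ j"
    using j block_index_less[OF assms(1) j] by (simp add: blk_def supervec_def)
qed (use assms in \<open>simp add: blk_def\<close>)

lemma supervec_blk:
  assumes "v \<in> carrier_vec (m * T)"
  shows "supervec m T (blk m v) = v"
proof (rule eq_vecI)
  fix k assume "k < dim_vec v"
  hence k: "k < m * T" using assms by simp
  hence "k mod m < m" by (cases m) auto
  moreover have "k div m * m + k mod m = k" by simp
  ultimately show "supervec m T (blk m v) $ k = v $ k"
    using k div_less_of_less_mult[OF k] by (simp add: supervec_def blk_def)
qed (use assms in \<open>simp add: supervec_def\<close>)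

lemma supervec_cong:
  assumes "\<And>t. t < T \<Longrightarrow> f t = g t"
  shows "supervec m T f = supervec m T g"
  using assms div_less_of_less_mult unfolding supervec_def by (intro eq_vecI) auto

lemma supervec_add:
  assumes "\<And>t. t < T \<Longrightarrow> f t \<in> carrier_vec m" "\<And>t. t < T \<Longrightarrow> g t \<in> carrier_vec m"
  shows "supervec m T (\<lambda>t. f t + g t) = supervec m T f + supervec m T g"
proof (rule eq_vecI)
  fix k assume "k < dim_vec (supervec m T f + supervec m T g)"
  hence k: "k < m * T" by (simp add: supervec_def)
  hence "k mod m < m" by (cases m) auto
  then show "supervec m T (\<lambda>t. f t + g t) $ k = (supervec m T f + supervec m T g) $ k"
    using k assms[OF div_less_of_less_mult[OF k]] by (simp add: supervec_def)
qed (simp add: supervec_def)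

definition stack_mat :: "nat \<Rightarrow> nat \<Rightarrow> nat \<Rightarrow> (nat \<Rightarrow> real mat) \<Rightarrow> real mat" where
  "stack_mat m n T G = mat (m * T) n (\<lambda>(i, j). G (i div m) $$ (i mod m, j))"

lemma stack_mat_carrier: "stack_mat m n T G \<in> carrier_mat (m * T) n"
  by (simp add: stack_mat_def)

lemma stack_mat_mult_vec:
  assumes G: "\<And>t. t < T \<Longrightarrow> G t \<in> carrier_mat m n" and u: "u \<in> carrier_vec n"
  shows "stack_mat m n T G *\<^sub>v u = supervec m T (\<lambda>t. G t *\<^sub>v u)"
proof (rule eq_vecI)
  fix k assume "k < dim_vec (supervec m T (\<lambda>t. G t *\<^sub>v u))"
  hence k: "k < m * T" by (simp add: supervec_def)
  hence t: "k div m < T" and r: "k mod m < m" by (auto simp: div_less_of_less_mult) (cases m; auto)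
  have "row (stack_mat m n T G) k = row (G (k div m)) (k mod m)"
    using k r G[OF t] by (intro eq_vecI) (auto simp: stack_mat_def)
  then show "(stack_mat m n T G *\<^sub>v u) $ k = supervec m T (\<lambda>t. G t *\<^sub>v u) $ k"
    using k r G[OF t] by (simp add: stack_mat_def supervec_def)
qed (simp add: stack_mat_def supervec_def)

definition block_selector :: "nat \<Rightarrow> nat \<Rightarrow> nat \<Rightarrow> real mat" where
  "block_selector m T t = mat m (m * T) (\<lambda>(i, j). if j = t * m + i then 1 else 0)"

lemma block_selector_carrier: "block_selector m T t \<in> carrier_mat m (m * T)"
  by (simp add: block_selector_def)

lemma blk_eq_block_selector_mult:
  assumes t: "t < T" and v: "v \<in> carrier_vec (m * T)"
  shows "blk m v t = block_selector m T t *\<^sub>v v"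
proof (rule eq_vecI)
  fix i assume "i < dim_vec (block_selector m T t *\<^sub>v v)"
  hence i: "i < m" by (simp add: block_selector_def)
  have "(block_selector m T t *\<^sub>v v) $ i = (\<Sum>j<m * T. (if j = t * m + i then 1 else 0) * v $ j)"
    using i v by (simp add: block_selector_def mult_mat_vec_def scalar_prod_def lessThan_atLeast0)
  also have "\<dots> = v $ (t * m + i)"
    using block_index_less[OF t i] by (simp add: if_distrib[of "\<lambda>c. c * _"] cong: if_cong)
  finally show "blk m v t $ i = (block_selector m T t *\<^sub>v v) $ i"
    using i by (simp add: blk_def)
qed (simp add: blk_def block_selector_def)

lemma blk_zero: "blk m (0\<^sub>v (m * T)) t = 0\<^sub>v m" if "t < T"
  using block_index_less[OF that] by (intro eq_vecI) (auto simp: blk_def)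

lemma mult_mat_vec_zero: "A \<in> carrier_mat r n \<Longrightarrow> A *\<^sub>v 0\<^sub>v n = (0\<^sub>v r :: real vec)"
  by (intro eq_vecI) auto

lemma mult_mat_vec_affine_combine:
  fixes X Y S P :: "real mat"
  assumes X: "X \<in> carrier_mat r p" and Y: "Y \<in> carrier_mat r q"
    and S: "S \<in> carrier_mat p n" and P: "P \<in> carrier_mat q n"
    and u: "u \<in> carrier_vec n" and z: "z \<in> carrier_vec p"
  shows "X *\<^sub>v (S *\<^sub>v u + z) + Y *\<^sub>v (P *\<^sub>v u) = (X * S + Y * P) *\<^sub>v u + X *\<^sub>v z"
  using assms by (intro eq_vecI)
    (auto simp: mult_add_distrib_mat_vec add_mult_distrib_mat_vec[of _ r n])

lemma smult_append_vec: "c \<cdot>\<^sub>v (u @\<^sub>v v) = (c \<cdot>\<^sub>v u) @\<^sub>v (c \<cdot>\<^sub>v v)"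
  by (intro eq_vecI) auto

lemma full_rank_mult_mat_vec_surj:
  fixes U :: "real mat"
  assumes U: "U \<in> carrier_mat n n" and rank: "vec_space.rank n U = n" and u: "u \<in> carrier_vec n"
  obtains g where "g \<in> carrier_vec n" "U *\<^sub>v g = u"
proof -
  have "det U \<noteq> 0" using vec_space.det_rank_iff[OF U] rank by simp
  from det_non_zero_imp_unit[OF U this, of undefined]
  obtain V where V: "V \<in> carrier_mat n n" and UV: "U * V = 1\<^sub>m n"
    unfolding Units_def ring_mat_def by auto
  have "U *\<^sub>v (V *\<^sub>v u) = u" using U V u UV by (simp flip: assoc_mult_mat_vec)
  moreover have "V *\<^sub>v u \<in> carrier_vec n" using V u by simp
  ultimately show ?thesis using that by blast
qed

lemma mat_of_cols_append_mult:
  assumes M: "M \<in> carrier_mat m n" and vs: "set vs \<subseteq> carrier_vec n"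
  shows "mat_of_cols (n + m) (map (\<lambda>v. v @\<^sub>v M *\<^sub>v v) vs) = mat_of_cols n vs @\<^sub>r (M * mat_of_cols n vs)"
proof (rule mat_col_eqI)
  fix j assume "j < dim_col (mat_of_cols n vs @\<^sub>r (M * mat_of_cols n vs))"
  hence j: "j < length vs" by (simp add: append_rows_def)
  have v: "vs ! j \<in> carrier_vec n" using vs j by auto
  have "col (mat_of_cols n vs @\<^sub>r (M * mat_of_cols n vs)) j
      = col (mat_of_cols n vs) j @\<^sub>v col (M * mat_of_cols n vs) j"
    unfolding append_rows_def using M j by (intro col_four_block_mat) auto
  also have "\<dots> = vs ! j @\<^sub>v M *\<^sub>v vs ! j"
    using col_mult2[OF M mat_of_cols_carrier(1) j] j v by simp
  finally show "col (mat_of_cols (n + m) (map (\<lambda>v. v @\<^sub>v M *\<^sub>v v) vs)) j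
      = col (mat_of_cols n vs @\<^sub>r (M * mat_of_cols n vs)) j"
    using j v M by simp
qed (use M in \<open>auto simp: append_rows_def\<close>)

definition vec_graph :: "nat \<Rightarrow> (real vec \<Rightarrow> real vec) \<Rightarrow> real vec set" where
  "vec_graph n f = {u @\<^sub>v f u | u. u \<in> carrier_vec n}"

lemma affine_vec_vec_graph:
  assumes M: "M \<in> carrier_mat m n" and F: "F \<in> carrier_vec m"
    and f: "\<And>u. u \<in> carrier_vec n \<Longrightarrow> f u = M *\<^sub>v u + F"
  shows "affine_vec (vec_graph n f)"
  unfolding affine_vec_def
proof (intro ballI allI)
  fix w w' and c :: real
  assume "w \<in> vec_graph n f" "w' \<in> vec_graph n f"
  then obtain a b where a: "a \<in> carrier_vec n" and b: "b \<in> carrier_vec n"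
    and w: "w = a @\<^sub>v f a" and w': "w' = b @\<^sub>v f b"
    unfolding vec_graph_def by blast
  let ?a = "c \<cdot>\<^sub>v a + (1 - c) \<cdot>\<^sub>v b"
  have "M *\<^sub>v ?a = c \<cdot>\<^sub>v (M *\<^sub>v a) + (1 - c) \<cdot>\<^sub>v (M *\<^sub>v b)"
    using M a b by (simp add: mult_add_distrib_mat_vec mult_mat_vec)
  then have "c \<cdot>\<^sub>v f a + (1 - c) \<cdot>\<^sub>v f b = f ?a"
    using M F a b by (simp add: f) (intro eq_vecI; simp add: algebra_simps)
  moreover have "f a \<in> carrier_vec m" "f b \<in> carrier_vec m"
    using M F a b by (simp_all add: f)
  ultimately have "c \<cdot>\<^sub>v w + (1 - c) \<cdot>\<^sub>v w' = ?a @\<^sub>v f ?a"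
    unfolding w w' smult_append_vec using a b by (subst append_vec_add[of _ n _ _ m]) auto
  moreover have "?a \<in> carrier_vec n" using a b by simp
  ultimately show "c \<cdot>\<^sub>v w + (1 - c) \<cdot>\<^sub>v w' \<in> vec_graph n f"
    unfolding vec_graph_def by blast
qed

lemma mem_vec_graph_iff_test_responses:
  assumes M: "M \<in> carrier_mat m n" and F: "F \<in> carrier_vec m"
    and f: "\<And>u. u \<in> carrier_vec n \<Longrightarrow> f u = M *\<^sub>v u + F"
    and us: "\<forall>k\<le>n. us k \<in> carrier_vec n" and us0: "us 0 = 0\<^sub>v n"
    and rank: "vec_space.rank n (mat_of_cols n (map us [1..<n + 1])) = n"
  defines "w \<equiv> \<lambda>k. us k @\<^sub>v f (us k)"
  defines "W \<equiv> mat_of_cols (n + m) (map (\<lambda>k. w k - w 0) [1..<n + 1])"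
  shows "x \<in> vec_graph n f \<longleftrightarrow> (\<exists>g \<in> carrier_vec n. x = W *\<^sub>v g + w 0)"
proof -
  let ?U = "mat_of_cols n (map us [1..<n + 1])"
  have U: "?U \<in> carrier_mat n n"
    using mat_of_cols_carrier(1)[of n "map us [1..<n + 1]"] by (simp del: upt_Suc)
  have w0: "w 0 = 0\<^sub>v n @\<^sub>v F"
    using F us0 by (simp add: w_def f mult_mat_vec_zero[OF M])
  have "w k - w 0 = us k @\<^sub>v M *\<^sub>v us k" if "k \<le> n" for k
    using us that M F unfolding w0 by (intro eq_vecI) (auto simp: w_def f)
  then have "map (\<lambda>k. w k - w 0) [1..<n + 1] = map (\<lambda>v. v @\<^sub>v M *\<^sub>v v) (map us [1..<n + 1])"
    unfolding map_map by (intro map_cong) auto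
  moreover have "set (map us [1..<n + 1]) \<subseteq> carrier_vec n" using us by auto
  ultimately have W_eq: "W = ?U @\<^sub>r (M * ?U)"
    unfolding W_def by (simp only: mat_of_cols_append_mult[OF M])
  have param: "W *\<^sub>v g + w 0 = ?U *\<^sub>v g @\<^sub>v f (?U *\<^sub>v g)" if g: "g \<in> carrier_vec n" for g
  proof -
    have "W *\<^sub>v g + w 0 = (?U *\<^sub>v g @\<^sub>v M *\<^sub>v (?U *\<^sub>v g)) + (0\<^sub>v n @\<^sub>v F)"
      unfolding W_eq mat_mult_append[OF U mult_carrier_mat[OF M U] g] w0 using M U g by simp
    also have "\<dots> = ?U *\<^sub>v g @\<^sub>v f (?U *\<^sub>v g)"
      using U M F g by (simp del: upt_Suc add: append_vec_add[of _ n _ _ m] f)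
    finally show ?thesis .
  qed
  show ?thesis
  proof
    assume "x \<in> vec_graph n f"
    then obtain u where u: "u \<in> carrier_vec n" and x: "x = u @\<^sub>v f u"
      unfolding vec_graph_def by blast
    obtain g where g: "g \<in> carrier_vec n" and Ug: "?U *\<^sub>v g = u"
      using full_rank_mult_mat_vec_surj[OF U rank u] .
    have "x = W *\<^sub>v g + w 0" by (simp only: x param[OF g] Ug)
    then show "\<exists>g \<in> carrier_vec n. x = W *\<^sub>v g + w 0" using g by blast
  next
    assume "\<exists>g \<in> carrier_vec n. x = W *\<^sub>v g + w 0"
    then obtain g where g: "g \<in> carrier_vec n" and x: "x = W *\<^sub>v g + w 0" by blast
    have "?U *\<^sub>v g \<in> carrier_vec n" using U g by simp
    then show "x \<in> vec_graph n f" unfolding vec_graph_def x param[OF g] by blast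
  qed
qed

primrec state_input_mat ::
  "(nat \<Rightarrow> real mat) \<Rightarrow> (nat \<Rightarrow> real mat) \<Rightarrow> nat \<Rightarrow> nat \<Rightarrow> nat \<Rightarrow> nat \<Rightarrow> real mat" where
  "state_input_mat A B nx nu T 0 = 0\<^sub>m nx (nu * T)"
| "state_input_mat A B nx nu T (Suc t) =
     A t * state_input_mat A B nx nu T t + B t * block_selector nu T t"

lemma state_input_mat_carrier:
  assumes "\<forall>t<T. A t \<in> carrier_mat nx nx" "\<forall>t<T. B t \<in> carrier_mat nx nu" and "t \<le> T"
  shows "state_input_mat A B nx nu T t \<in> carrier_mat nx (nu * T)"
  using assms(3)
proof (induction t)
  case (Suc t)
  then have "A t \<in> carrier_mat nx nx" "B t \<in> carrier_mat nx nu" using assms(1,2) by auto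
  with Suc show ?case using block_selector_carrier[of nu T t] by simp
qed simp

lemma state_traj_carrier:
  assumes "\<forall>t<T. B t \<in> carrier_mat nx nu" and "x0 \<in> carrier_vec nx" and "t \<le> T"
  shows "state_traj A B nu x0 u t \<in> carrier_vec nx"
proof (cases t)
  case (Suc s)
  then have "B s \<in> carrier_mat nx nu" using assms(1,3) by simp
  then show ?thesis unfolding Suc state_traj.simps by (intro carrier_vecI) simp
qed (use assms(2) in simp)

lemma state_traj_eq_forced_plus_free:
  assumes dimA: "\<forall>t<T. A t \<in> carrier_mat nx nx" and dimB: "\<forall>t<T. B t \<in> carrier_mat nx nu"
    and x0: "x0 \<in> carrier_vec nx" and u: "u \<in> carrier_vec (nu * T)"
  shows "t \<le> T \<Longrightarrow> state_traj A B nu x0 u t =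
    state_input_mat A B nx nu T t *\<^sub>v u + state_traj A B nu x0 (0\<^sub>v (nu * T)) t"
proof (induction t)
  case 0
  then show ?case using x0 u by auto
next
  case (Suc t)
  let ?S = "state_input_mat A B nx nu T t" and ?z = "state_traj A B nu x0 (0\<^sub>v (nu * T)) t"
  have t: "t < T" using Suc.prems by simp
  have At: "A t \<in> carrier_mat nx nx" and Bt: "B t \<in> carrier_mat nx nu" using dimA dimB t by auto
  have S: "?S \<in> carrier_mat nx (nu * T)" using state_input_mat_carrier[OF dimA dimB] t by simp
  have z: "?z \<in> carrier_vec nx" using state_traj_carrier[OF dimB x0] t by simp
  have "state_traj A B nu x0 u (Suc t) = A t *\<^sub>v (?S *\<^sub>v u + ?z) + B t *\<^sub>v (block_selector nu T t *\<^sub>v u)"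
    using Suc t by (simp add: blk_eq_block_selector_mult[OF t u])
  also have "\<dots> = state_input_mat A B nx nu T (Suc t) *\<^sub>v u + A t *\<^sub>v ?z"
    using mult_mat_vec_affine_combine[OF At Bt S block_selector_carrier u z] by simp
  also have "A t *\<^sub>v ?z = state_traj A B nu x0 (0\<^sub>v (nu * T)) (Suc t)"
    using At Bt z by (simp add: blk_zero[OF t] mult_mat_vec_zero)
  finally show ?case .
qed

definition response_mat ::
  "(nat \<Rightarrow> real mat) \<Rightarrow> (nat \<Rightarrow> real mat) \<Rightarrow> (nat \<Rightarrow> real mat) \<Rightarrow> (nat \<Rightarrow> real mat)
   \<Rightarrow> nat \<Rightarrow> nat \<Rightarrow> nat \<Rightarrow> nat \<Rightarrow> real mat" where
  "response_mat A B C D nx nu ny T = stack_mat ny (nu * T) T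
     (\<lambda>t. C t * state_input_mat A B nx nu T t + D t * block_selector nu T t)"

lemma sys_output_carrier: "sys_output A B C D nu ny T x0 u \<in> carrier_vec (ny * T)"
  by (simp add: sys_output_def supervec_def)

lemma sys_output_eq_forced_plus_free:
  assumes dimA: "\<forall>t<T. A t \<in> carrier_mat nx nx" and dimB: "\<forall>t<T. B t \<in> carrier_mat nx nu"
    and dimC: "\<forall>t<T. C t \<in> carrier_mat ny nx" and dimD: "\<forall>t<T. D t \<in> carrier_mat ny nu"
    and x0: "x0 \<in> carrier_vec nx" and u: "u \<in> carrier_vec (nu * T)"
  shows "sys_output A B C D nu ny T x0 u =
    response_mat A B C D nx nu ny T *\<^sub>v u + sys_output A B C D nu ny T x0 (0\<^sub>v (nu * T))"
proof -
  let ?Q = "\<lambda>t. C t * state_input_mat A B nx nu T t + D t * block_selector nu T t"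
  let ?z = "state_traj A B nu x0 (0\<^sub>v (nu * T))"
  have dims: "C t \<in> carrier_mat ny nx" "D t \<in> carrier_mat ny nu"
    "state_input_mat A B nx nu T t \<in> carrier_mat nx (nu * T)" "?z t \<in> carrier_vec nx"
    if "t < T" for t
    using that dimC dimD state_input_mat_carrier[OF dimA dimB] state_traj_carrier[OF dimB x0] by auto
  have Q: "?Q t \<in> carrier_mat ny (nu * T)" if "t < T" for t
    using mult_carrier_mat[OF dims(2)[OF that] block_selector_carrier] by (rule add_carrier_mat)
  have "sys_output A B C D nu ny T x0 u = supervec ny T (\<lambda>t. ?Q t *\<^sub>v u + C t *\<^sub>v ?z t)"
    unfolding sys_output_def
  proof (rule supervec_cong)
    fix t assume t: "t < T"
    show "C t *\<^sub>v state_traj A B nu x0 u t + D t *\<^sub>v blk nu u t = ?Q t *\<^sub>v u + C t *\<^sub>v ?z t"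
      using state_traj_eq_forced_plus_free[OF dimA dimB x0 u] blk_eq_block_selector_mult[OF t u]
        mult_mat_vec_affine_combine[OF dims(1,2)[OF t] dims(3)[OF t] block_selector_carrier u dims(4)[OF t]]
        t by simp
  qed
  also have "\<dots> = supervec ny T (\<lambda>t. ?Q t *\<^sub>v u) + supervec ny T (\<lambda>t. C t *\<^sub>v ?z t)"
    using mult_mat_vec_carrier[OF Q u] mult_mat_vec_carrier[OF dims(1,4)] by (rule supervec_add)
  also have "supervec ny T (\<lambda>t. ?Q t *\<^sub>v u) = response_mat A B C D nx nu ny T *\<^sub>v u"
    unfolding response_mat_def using Q u by (rule stack_mat_mult_vec[symmetric])
  also have "supervec ny T (\<lambda>t. C t *\<^sub>v ?z t) = sys_output A B C D nu ny T x0 (0\<^sub>v (nu * T))"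
    unfolding sys_output_def
  proof (rule supervec_cong)
    fix t assume t: "t < T"
    show "C t *\<^sub>v ?z t = C t *\<^sub>v ?z t + D t *\<^sub>v blk nu (0\<^sub>v (nu * T)) t"
      using mult_mat_vec_carrier[OF dims(1,4)[OF t]] by (simp add: blk_zero[OF t] mult_mat_vec_zero[OF dims(2)[OF t]])
  qed
  finally show ?thesis .
qed

lemma u_part_append: "u \<in> carrier_vec (nu * T) \<Longrightarrow> u_part nu T (u @\<^sub>v y) = u"
  by (intro eq_vecI) (auto simp: u_part_def)

lemma y_part_append:
  "u \<in> carrier_vec (nu * T) \<Longrightarrow> y \<in> carrier_vec (ny * T) \<Longrightarrow> y_part nu ny T (u @\<^sub>v y) = y"
  by (intro eq_vecI) (auto simp: y_part_def)

lemma u_part_append_y_part: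
  "w \<in> carrier_vec ((nu + ny) * T) \<Longrightarrow> u_part nu T w @\<^sub>v y_part nu ny T w = w"
  by (intro eq_vecI) (auto simp: u_part_def y_part_def algebra_simps)

lemma behavior_eq_vec_graph:
  assumes dimD: "\<forall>t<T. D t \<in> carrier_mat ny nu"
  shows "behavior A B C D nu ny T x0 = vec_graph (nu * T) (sys_output A B C D nu ny T x0)"
proof (intro equalityI subsetI)
  fix w assume "w \<in> behavior A B C D nu ny T x0"
  then obtain x where w: "w \<in> carrier_vec ((nu + ny) * T)" and "x 0 = x0"
    and sys: "\<forall>t < T. x (Suc t) = A t *\<^sub>v x t + B t *\<^sub>v blk nu (u_part nu T w) t \<and>
                 blk ny (y_part nu ny T w) t = C t *\<^sub>v x t + D t *\<^sub>v blk nu (u_part nu T w) t"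
    unfolding behavior_def by blast
  then have x: "x t = state_traj A B nu x0 (u_part nu T w) t" if "t \<le> T" for t
    using that by (induction t) auto
  have "y_part nu ny T w = supervec ny T (blk ny (y_part nu ny T w))"
    by (rule supervec_blk[symmetric]) (simp add: y_part_def)
  also have "\<dots> = sys_output A B C D nu ny T x0 (u_part nu T w)"
    unfolding sys_output_def by (rule supervec_cong) (use sys x in auto)
  finally have "w = u_part nu T w @\<^sub>v sys_output A B C D nu ny T x0 (u_part nu T w)"
    using u_part_append_y_part[OF w] by simp
  moreover have "u_part nu T w \<in> carrier_vec (nu * T)" by (simp add: u_part_def)
  ultimately show "w \<in> vec_graph (nu * T) (sys_output A B C D nu ny T x0)"
    unfolding vec_graph_def by blast
next
  fix w assume "w \<in> vec_graph (nu * T) (sys_output A B C D nu ny T x0)"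
  then obtain u where u: "u \<in> carrier_vec (nu * T)"
    and w: "w = u @\<^sub>v sys_output A B C D nu ny T x0 u"
    unfolding vec_graph_def by blast
  let ?x = "state_traj A B nu x0 u"
  have "blk ny (sys_output A B C D nu ny T x0 u) t = C t *\<^sub>v ?x t + D t *\<^sub>v blk nu u t"
    if t: "t < T" for t
  proof -
    have "D t \<in> carrier_mat ny nu" using dimD t by simp
    then have "C t *\<^sub>v ?x t + D t *\<^sub>v blk nu u t \<in> carrier_vec ny" by (intro carrier_vecI) simp
    then show ?thesis unfolding sys_output_def by (rule blk_supervec[OF t])
  qed
  then have "\<exists>x. x 0 = x0 \<and> (\<forall>t < T. x (Suc t) = A t *\<^sub>v x t + B t *\<^sub>v blk nu u t \<and>
      blk ny (sys_output A B C D nu ny T x0 u) t = C t *\<^sub>v x t + D t *\<^sub>v blk nu u t)"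
    by (intro exI[of _ ?x]) simp
  moreover have "w \<in> carrier_vec ((nu + ny) * T)"
    unfolding w add_mult_distrib using u sys_output_carrier by (rule append_carrier_vec)
  ultimately show "w \<in> behavior A B C D nu ny T x0"
    unfolding behavior_def w using u_part_append[OF u] y_part_append[OF u sys_output_carrier] by simp
qed

theorem lemma1:
  fixes A B C D :: "nat \<Rightarrow> real mat" and nx nu ny T :: nat and x0 :: "real vec"
    and us :: "nat \<Rightarrow> real vec"
  assumes T: "T \<ge> 1"
    and dimA: "\<forall>t<T. A t \<in> carrier_mat nx nx"
    and dimB: "\<forall>t<T. B t \<in> carrier_mat nx nu"
    and dimC: "\<forall>t<T. C t \<in> carrier_mat ny nx"
    and dimD: "\<forall>t<T. D t \<in> carrier_mat ny nu"
    and x0: "x0 \<in> carrier_vec nx"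
  shows "affine_vec (behavior A B C D nu ny T x0) \<and>
    ((\<forall>k\<le>nu * T. us k \<in> carrier_vec (nu * T))
     \<and> us 0 = 0\<^sub>v (nu * T)
     \<and> vec_space.rank (nu * T) (mat_of_cols (nu * T) (map us [1..<nu * T + 1])) = nu * T
     \<longrightarrow>
     (let w = (\<lambda>k. us k @\<^sub>v sys_output A B C D nu ny T x0 (us k));
          W = mat_of_cols ((nu + ny) * T) (map (\<lambda>k. w k - w 0) [1..<nu * T + 1])
      in \<forall>wb \<in> carrier_vec ((nu + ny) * T).
           wb \<in> behavior A B C D nu ny T x0 \<longleftrightarrow>
           (\<exists>g \<in> carrier_vec (nu * T). wb = W *\<^sub>v g + w 0)))"
proof -
  let ?n = "nu * T" and ?m = "ny * T"
  let ?f = "sys_output A B C D nu ny T x0"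
  let ?M = "response_mat A B C D nx nu ny T"
  have M: "?M \<in> carrier_mat ?m ?n" by (simp add: response_mat_def stack_mat_carrier)
  have f: "\<And>u. u \<in> carrier_vec ?n \<Longrightarrow> ?f u = ?M *\<^sub>v u + ?f (0\<^sub>v ?n)"
    by (rule sys_output_eq_forced_plus_free[OF dimA dimB dimC dimD x0])
  have behavior: "behavior A B C D nu ny T x0 = vec_graph ?n ?f"
    by (rule behavior_eq_vec_graph[OF dimD])
  have dim: "(nu + ny) * T = ?n + ?m" by (simp add: add_mult_distrib)
  show ?thesis
    unfolding Let_def behavior dim
    using affine_vec_vec_graph[OF M sys_output_carrier f]
      mem_vec_graph_iff_test_responses[OF M sys_output_carrier f]
    by blast
qed

end
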